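(* Let $G=(V,E)$ be an $S$-regular graph with cells $V_1,\dots,V_k$, $n_i=|V_i|$, let $C\subsetneq V$, $m=|V|-|C|$, and $c_i=|C\cap V_i|/n_i$. Then for every $\ell\ge0$ the total number of walks of length $\ell$ in $G$ that avoid $C$ (i.e. all of whose vertices lie in $V\setminus C$) is at most \[m\Bigl(\lambda_S\bigl(1-\min_{1\le i\le k}c_i\bigr)+\lambda_B\bigl(\min_{1\le i\le k}c_i\bigr)\Bigr)^{\ell}.\]
   Context: All graphs are simple, undirected and connected. $G$ is $S$-regular ($S=(s_{ij})$ a $k\times k$ nonnegative integer matrix) if $V$ is partitioned into nonempty cells $V_1,\dots,V_k$ such that every vertex of $V_i$ has exactly $s_{ij}$ neighbours in $V_j$. Let $A$ be the adjacency matrix of $G$, $|V|=n>k$. The subspace $W=\mathrm{span}\{\mathbf{1}_{V_1},\dots,\mathbf{1}_{V_k}\}$ is $A$-invariant and the eigenvalues of $A$ on $W$ are the eigenvalues of $S$; the eigenvalues of $A$ on $W^\perp$ ($n-k$ of them, with multiplicity) are the bulk eigenvalues. $\lambda_S$ is the largest eigenvalue of $S$ and $\lambda_B$ is the largest absolute value of a bulk eigenvalue. *)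

theory Defs
  imports Main Complex_Main
begin

definition simple_connected_graph :: "('v::finite \<Rightarrow> 'v \<Rightarrow> bool) \<Rightarrow> bool" where
  "simple_connected_graph E \<longleftrightarrow>
     (\<forall>u v. E u v \<longrightarrow> E v u) \<and> (\<forall>v. \<not> E v v) \<and> (\<forall>u v. E\<^sup>*\<^sup>* u v)"

definition cell :: "('v \<Rightarrow> nat) \<Rightarrow> nat \<Rightarrow> 'v set" where
  "cell p i = {v. p v = i}"

definition S_regular ::
  "('v::finite \<Rightarrow> 'v \<Rightarrow> bool) \<Rightarrow> nat \<Rightarrow> ('v \<Rightarrow> nat) \<Rightarrow> (nat \<Rightarrow> nat \<Rightarrow> nat) \<Rightarrow> bool" where
  "S_regular E k p S \<longleftrightarrow>
     (\<forall>v. p v < k) \<and> (\<forall>i<k. cell p i \<noteq> {}) \<and>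
     (\<forall>v. \<forall>j<k. card {w. E v w \<and> p w = j} = S (p v) j)"

definition adj_op :: "('v::finite \<Rightarrow> 'v \<Rightarrow> bool) \<Rightarrow> ('v \<Rightarrow> real) \<Rightarrow> 'v \<Rightarrow> real" where
  "adj_op E x v = (\<Sum>w\<in>{w. E v w}. x w)"

text \<open>x is orthogonal to W = span of the cell indicator vectors.\<close>

definition perp_cells :: "nat \<Rightarrow> ('v::finite \<Rightarrow> nat) \<Rightarrow> ('v \<Rightarrow> real) \<Rightarrow> bool" where
  "perp_cells k p x \<longleftrightarrow> (\<forall>i<k. (\<Sum>v\<in>cell p i. x v) = 0)"

text \<open>Bulk eigenvalues: eigenvalues of A restricted to the (A-invariant) subspace W^perp.\<close>

definition bulk_eigenvalues ::
  "('v::finite \<Rightarrow> 'v \<Rightarrow> bool) \<Rightarrow> nat \<Rightarrow> ('v \<Rightarrow> nat) \<Rightarrow> real set" where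
  "bulk_eigenvalues E k p =
     {\<mu>. \<exists>x. x \<noteq> (\<lambda>_. 0) \<and> perp_cells k p x \<and> adj_op E x = (\<lambda>v. \<mu> * x v)}"

definition lambda_B :: "('v::finite \<Rightarrow> 'v \<Rightarrow> bool) \<Rightarrow> nat \<Rightarrow> ('v \<Rightarrow> nat) \<Rightarrow> real" where
  "lambda_B E k p = Max (abs ` bulk_eigenvalues E k p)"

text \<open>(Real) eigenvalues of the k x k quotient matrix S (all its eigenvalues are real,
  being eigenvalues of A on W).\<close>

definition matrix_eigenvalues :: "nat \<Rightarrow> (nat \<Rightarrow> nat \<Rightarrow> nat) \<Rightarrow> real set" where
  "matrix_eigenvalues k S =
     {\<mu>. \<exists>y::nat \<Rightarrow> real. (\<exists>i<k. y i \<noteq> 0) \<and>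
          (\<forall>i<k. (\<Sum>j<k. real (S i j) * y j) = \<mu> * y i)}"

definition lambda_S :: "nat \<Rightarrow> (nat \<Rightarrow> nat \<Rightarrow> nat) \<Rightarrow> real" where
  "lambda_S k S = Max (matrix_eigenvalues k S)"

definition avoiding_walks :: "('v \<Rightarrow> 'v \<Rightarrow> bool) \<Rightarrow> 'v set \<Rightarrow> nat \<Rightarrow> 'v list set" where
  "avoiding_walks E C l =
     {xs. length xs = Suc l \<and> successively E xs \<and> set xs \<inter> C = {}}"

end

theory Submission
  imports Defs "HOL-Analysis.Analysis"
begin

text \<open>
  Let \<open>U = V - C\<close> and let \<open>M\<close> be the adjacency operator with all coordinates in \<open>C\<close>
  cleared before and after. The number of walks of length \<open>l\<close> avoiding \<open>C\<close> is
  \<open>\<langle>1\<^sub>U, M\<^sup>l 1\<^sub>U\<rangle>\<close>, and since \<open>M\<close> is self-adjoint, a bound \<open>\<bar>\<langle>x, M x\<rangle>\<bar> \<le> R \<parallel>x\<parallel>\<^sup>2\<close>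
  bounds its operator norm by \<open>R\<close>, hence the count by \<open>R\<^sup>l \<parallel>1\<^sub>U\<parallel>\<^sup>2 = m R\<^sup>l\<close>.

  For \<open>x\<close> supported on \<open>U\<close> we have \<open>\<bar>\<langle>x, A x\<rangle>\<bar> \<le> \<langle>\<bar>x\<bar>, A \<bar>x\<bar>\<rangle>\<close>. Split \<open>\<bar>x\<bar> = w + b\<close> with
  \<open>w\<close> its cell means (in \<open>W\<close>) and \<open>b \<in> W\<^sup>\<bottom>\<close>; both spaces are \<open>A\<close>-invariant, so
  \<open>\<langle>\<bar>x\<bar>, A \<bar>x\<bar>\<rangle> \<le> \<lambda>\<^sub>S \<parallel>w\<parallel>\<^sup>2 + \<lambda>\<^sub>B \<parallel>b\<parallel>\<^sup>2\<close>. Cauchy-Schwarz on each cell minus \<open>C\<close> gives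
  \<open>\<parallel>w\<parallel>\<^sup>2 \<le> (1 - min c\<^sub>i) \<parallel>x\<parallel>\<^sup>2\<close>, and \<open>\<lambda>\<^sub>B \<le> \<lambda>\<^sub>S\<close> turns this into the rate \<open>R\<close> of the theorem.
  That \<open>\<lambda>\<^sub>S\<close> bounds the Rayleigh quotient of \<open>A\<close> everywhere is the Perron-type fact that
  a maximiser may be taken nonnegative, so that its cell means are a nonzero eigenvector in \<open>W\<close>.
\<close>

lemma finite_eigenvalues_selfadjoint:
  fixes T :: "'a::euclidean_space \<Rightarrow> 'a"
  assumes selfadj: "\<And>x y. T x \<bullet> y = x \<bullet> T y"
  shows "finite {\<mu>. \<exists>x. x \<noteq> 0 \<and> T x = \<mu> *\<^sub>R x}"
proof -
  define Ev where "Ev = {\<mu>. \<exists>x. x \<noteq> 0 \<and> T x = \<mu> *\<^sub>R x}"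
  define e where "e \<mu> = (SOME x. x \<noteq> 0 \<and> T x = \<mu> *\<^sub>R x)" for \<mu>
  have e: "e \<mu> \<noteq> 0 \<and> T (e \<mu>) = \<mu> *\<^sub>R e \<mu>" if "\<mu> \<in> Ev" for \<mu>
    using someI_ex[of "\<lambda>x. x \<noteq> 0 \<and> T x = \<mu> *\<^sub>R x"] that unfolding Ev_def e_def by blast
  have orth: "e \<mu> \<bullet> e \<nu> = 0" if "\<mu> \<in> Ev" "\<nu> \<in> Ev" "\<mu> \<noteq> \<nu>" for \<mu> \<nu>
  proof -
    have "\<mu> * (e \<mu> \<bullet> e \<nu>) = \<nu> * (e \<mu> \<bullet> e \<nu>)"
      using selfadj[of "e \<mu>" "e \<nu>"] e[OF that(1)] e[OF that(2)] by simp
    then show ?thesis using that(3) by simp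
  qed
  have "pairwise orthogonal (e ` Ev)"
    using orth unfolding pairwise_def orthogonal_def by blast
  moreover have "0 \<notin> e ` Ev"
    using e by auto
  ultimately have "finite (e ` Ev)"
    using independent_imp_finite pairwise_orthogonal_independent by blast
  moreover have "inj_on e Ev"
    using orth e by (metis inj_onI inner_eq_zero_iff)
  ultimately show ?thesis
    unfolding Ev_def[symmetric] by (rule finite_imageD)
qed

lemma rayleigh_max_exists:
  fixes T :: "'a::euclidean_space \<Rightarrow> 'a"
  assumes "linear T" and "subspace L" and "x0 \<in> L" and "x0 \<noteq> 0"
  shows "\<exists>z\<in>L. norm z = 1 \<and> (\<forall>x\<in>L. x \<bullet> T x \<le> (z \<bullet> T z) * (x \<bullet> x))"
proof -
  define K where "K = L \<inter> sphere 0 1"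
  have "compact K"
    unfolding K_def using \<open>subspace L\<close> by (intro closed_Int_compact closed_subspace compact_sphere)
  moreover have "(1 / norm x0) *\<^sub>R x0 \<in> K"
    using assms(2-4) by (simp add: K_def subspace_scale)
  then have "K \<noteq> {}" by blast
  moreover have "continuous_on K (\<lambda>x. x \<bullet> T x)"
    using \<open>linear T\<close> by (intro continuous_intros linear_continuous_on linear_conv_bounded_linear[THEN iffD1])
  ultimately obtain z where "z \<in> K" and max: "\<And>u. u \<in> K \<Longrightarrow> u \<bullet> T u \<le> z \<bullet> T z"
    using continuous_attains_sup by metis
  have "x \<bullet> T x \<le> (z \<bullet> T z) * (x \<bullet> x)" if "x \<in> L" for x
  proof (cases "x = 0")
    case True
    then show ?thesis by (simp add: linear_0[OF \<open>linear T\<close>])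
  next
    case False
    define u where "u = (1 / norm x) *\<^sub>R x"
    have "u \<in> K"
      using that False \<open>subspace L\<close> by (simp add: K_def u_def subspace_scale)
    have "u \<bullet> T u = (x \<bullet> T x) / (x \<bullet> x)"
      using False by (simp add: u_def linear_scale[OF \<open>linear T\<close>] power2_norm_eq_inner[symmetric]
          power2_eq_square)
    with max[OF \<open>u \<in> K\<close>] False show ?thesis
      by (simp add: divide_le_eq)
  qed
  then show ?thesis
    using \<open>z \<in> K\<close> by (auto simp: K_def)
qed

lemma quadratic_nonpos_imp_linear_coeff_zero:
  fixes a e :: real
  assumes quad: "\<And>t. 2 * t * a + t * t * e \<le> 0" and "0 \<le> a"
  shows "a = 0"
proof (rule ccontr)
  assume "a \<noteq> 0"
  with \<open>0 \<le> a\<close> have "a > 0"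
    by simp
  define t where "t = a / (\<bar>e\<bar> + 1)"
  have "t > 0"
    using \<open>a > 0\<close> by (simp add: t_def add_pos_nonneg)
  have "t * \<bar>e\<bar> < a"
    using \<open>a > 0\<close> by (simp add: t_def field_simps)
  then have "a < 2 * a + t * e"
    using abs_ge_minus_self[of e] \<open>t > 0\<close> mult_left_mono[of "- e" "\<bar>e\<bar>" t] by linarith
  then have "t * a < t * (2 * a + t * e)"
    using \<open>t > 0\<close> by (rule mult_strict_left_mono)
  moreover have "t * (2 * a + t * e) \<le> 0"
    using quad[of t] by (simp add: algebra_simps)
  moreover have "0 < t * a"
    using \<open>t > 0\<close> \<open>a > 0\<close> by simp
  ultimately show False
    by linarith
qed

lemma rayleigh_max_imp_eigenvector:
  fixes T :: "'a::real_inner \<Rightarrow> 'a"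
  assumes "linear T" and selfadj: "\<And>x y. T x \<bullet> y = x \<bullet> T y"
    and "subspace L" and invariant: "\<And>x. x \<in> L \<Longrightarrow> T x \<in> L"
    and le: "\<And>x. x \<in> L \<Longrightarrow> x \<bullet> T x \<le> \<mu> * (x \<bullet> x)"
    and "z \<in> L" and eq: "z \<bullet> T z = \<mu> * (z \<bullet> z)"
  shows "T z = \<mu> *\<^sub>R z"
proof -
  define y where "y = T z - \<mu> *\<^sub>R z"
  have "y \<in> L"
    unfolding y_def using assms by (intro subspace_diff subspace_scale invariant)
  define e where "e = y \<bullet> T y - \<mu> * (y \<bullet> y)"
  have yTz: "y \<bullet> T z = y \<bullet> y + \<mu> * (y \<bullet> z)"
    by (simp add: y_def inner_diff_right)
  have zTy: "z \<bullet> T y = y \<bullet> T z"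
    using selfadj[of z y] by (simp add: inner_commute)
  txt \<open>The form \<open>\<mu> * (x \<bullet> x) - x \<bullet> T x\<close> is nonnegative on \<open>L\<close> and vanishes at \<open>z\<close>,
    so along \<open>z + t *\<^sub>R y\<close> its linear term \<open>-2 * t * (y \<bullet> y)\<close> must vanish.\<close>
  have quad: "2 * t * (y \<bullet> y) + t * t * e \<le> 0" for t
  proof -
    have "z + t *\<^sub>R y \<in> L"
      using \<open>z \<in> L\<close> \<open>y \<in> L\<close> \<open>subspace L\<close> by (intro subspace_add subspace_scale)
    then have "(z + t *\<^sub>R y) \<bullet> T (z + t *\<^sub>R y) \<le> \<mu> * ((z + t *\<^sub>R y) \<bullet> (z + t *\<^sub>R y))"
      by (rule le)
    moreover have "(z + t *\<^sub>R y) \<bullet> T (z + t *\<^sub>R y) = z \<bullet> T z + 2 * t * (y \<bullet> T z) + t * t * (y \<bullet> T y)"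
      by (simp add: linear_add[OF \<open>linear T\<close>] linear_scale[OF \<open>linear T\<close>]
          inner_add_left inner_add_right zTy algebra_simps)
    moreover have "(z + t *\<^sub>R y) \<bullet> (z + t *\<^sub>R y) = z \<bullet> z + 2 * t * (y \<bullet> z) + t * t * (y \<bullet> y)"
      using inner_commute[of z y] by (simp add: inner_add_left inner_add_right algebra_simps)
    ultimately have "z \<bullet> T z + 2 * t * (y \<bullet> T z) + t * t * (y \<bullet> T y)
        \<le> \<mu> * (z \<bullet> z + 2 * t * (y \<bullet> z) + t * t * (y \<bullet> y))"
      by simp
    then show ?thesis
      unfolding eq yTz e_def by (simp add: algebra_simps)
  qed
  have "y \<bullet> y = 0"
    using quad by (rule quadratic_nonpos_imp_linear_coeff_zero) simp
  then show ?thesis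
    by (simp add: y_def)
qed

lemma norm_le_of_abs_rayleigh_le:
  fixes T :: "'a::real_inner \<Rightarrow> 'a"
  assumes "linear T" and selfadj: "\<And>x y. T x \<bullet> y = x \<bullet> T y"
    and bound: "\<And>x. \<bar>x \<bullet> T x\<bar> \<le> R * (x \<bullet> x)"
  shows "norm (T x) \<le> R * norm x"
proof (cases "T x = 0")
  case True
  have "0 \<le> R * (x \<bullet> x)"
    using bound[of x] abs_ge_zero order_trans by blast
  then have "0 \<le> R * norm x"
    by (cases "x = 0") (auto simp: zero_le_mult_iff dot_square_norm)
  then show ?thesis
    using True by simp
next
  case False
  then have "x \<noteq> 0"
    using linear_0[OF \<open>linear T\<close>] by auto
  txt \<open>Polarization against \<open>T x\<close> rescaled to the length of \<open>x\<close>.\<close>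
  define y where "y = (norm x / norm (T x)) *\<^sub>R T x"
  have "y \<bullet> y = x \<bullet> x"
    using False by (simp add: y_def dot_square_norm)
  have Txy: "T x \<bullet> y = norm x * norm (T x)"
    using False by (simp add: y_def dot_square_norm power2_eq_square)
  have plus: "(x + y) \<bullet> T (x + y) = x \<bullet> T x + 2 * (T x \<bullet> y) + y \<bullet> T y"
    using selfadj[of x y] inner_commute[of y "T x"]
    by (simp add: linear_add[OF \<open>linear T\<close>] inner_add_left inner_add_right)
  have minus: "(x - y) \<bullet> T (x - y) = x \<bullet> T x - 2 * (T x \<bullet> y) + y \<bullet> T y"
    using selfadj[of x y] inner_commute[of y "T x"]
    by (simp add: linear_diff[OF \<open>linear T\<close>] inner_diff_left inner_diff_right)
  have parallelogram: "(x + y) \<bullet> (x + y) + (x - y) \<bullet> (x - y) = 2 * (x \<bullet> x) + 2 * (y \<bullet> y)"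
    using inner_commute[of x y] by (simp add: inner_add_left inner_add_right inner_diff_left inner_diff_right)
  have "4 * (T x \<bullet> y) \<le> R * ((x + y) \<bullet> (x + y)) + R * ((x - y) \<bullet> (x - y))"
    using bound[of "x + y"] bound[of "x - y"] plus minus by linarith
  also have "\<dots> = 4 * R * (x \<bullet> x)"
    using parallelogram \<open>y \<bullet> y = x \<bullet> x\<close> by (simp add: distrib_left[symmetric])
  finally have "norm x * norm (T x) \<le> norm x * (R * norm x)"
    unfolding Txy by (simp add: dot_square_norm power2_eq_square ac_simps)
  then show ?thesis
    using \<open>x \<noteq> 0\<close> by simp
qed

lemma norm_funpow_le:
  fixes T :: "'a::real_normed_vector \<Rightarrow> 'a"
  assumes bound: "\<And>x. norm (T x) \<le> R * norm x" and "0 \<le> R"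
  shows "norm ((T ^^ n) x) \<le> R ^ n * norm x"
proof (induction n)
  case (Suc n)
  have "norm (T ((T ^^ n) x)) \<le> R * norm ((T ^^ n) x)"
    by (rule bound)
  also have "\<dots> \<le> R * (R ^ n * norm x)"
    using Suc.IH \<open>0 \<le> R\<close> by (rule mult_left_mono)
  finally show ?case by simp
qed simp

lemma inner_funpow_le_of_abs_rayleigh_le:
  fixes T :: "'a::real_inner \<Rightarrow> 'a"
  assumes "linear T" and "\<And>x y. T x \<bullet> y = x \<bullet> T y"
    and bound: "\<And>x. \<bar>x \<bullet> T x\<bar> \<le> R * (x \<bullet> x)"
  shows "y \<bullet> (T ^^ n) y \<le> R ^ n * (y \<bullet> y)"
proof (cases "y = 0")
  case False
  have "0 \<le> R * (y \<bullet> y)"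
    using bound[of y] abs_ge_zero order_trans by blast
  moreover have "0 < y \<bullet> y"
    using False by simp
  ultimately have "0 \<le> R"
    by (simp add: zero_le_mult_iff)
  have "y \<bullet> (T ^^ n) y \<le> norm y * norm ((T ^^ n) y)"
    by (rule norm_cauchy_schwarz)
  also have "\<dots> \<le> norm y * (R ^ n * norm y)"
    using norm_funpow_le[OF norm_le_of_abs_rayleigh_le[OF assms] \<open>0 \<le> R\<close>]
    by (rule mult_left_mono) simp
  also have "\<dots> = R ^ n * (y \<bullet> y)"
    by (simp add: dot_square_norm power2_eq_square)
  finally show ?thesis .
qed simp

definition adj_map :: "('v::finite \<Rightarrow> 'v \<Rightarrow> bool) \<Rightarrow> real^'v \<Rightarrow> real^'v" where
  "adj_map E x = (\<chi> v. adj_op E (vec_nth x) v)"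

lemma adj_map_nth [simp]: "adj_map E x $ v = (\<Sum>w | E v w. x $ w)"
  by (simp add: adj_map_def adj_op_def)

lemma linear_adj_map: "linear (adj_map E)"
  by (rule linearI) (simp_all add: vec_eq_iff sum.distrib sum_distrib_left)

lemma inner_adj_map: "x \<bullet> adj_map E y = (\<Sum>v\<in>UNIV. \<Sum>w\<in>UNIV. if E v w then x $ v * y $ w else 0)"
  by (simp add: inner_vec_def sum_distrib_left sum.inter_filter[symmetric])

lemma adj_map_selfadjoint:
  assumes "symp E"
  shows "adj_map E x \<bullet> y = x \<bullet> adj_map E y"
proof -
  have "adj_map E x \<bullet> y = (\<Sum>v\<in>UNIV. \<Sum>w\<in>UNIV. if E v w then y $ v * x $ w else 0)"
    by (simp add: inner_commute inner_adj_map)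
  also have "\<dots> = (\<Sum>w\<in>UNIV. \<Sum>v\<in>UNIV. if E w v then x $ w * y $ v else 0)"
    using assms by (subst sum.swap) (auto intro!: sum.cong dest: sympD)
  also have "\<dots> = x \<bullet> adj_map E y"
    by (simp add: inner_adj_map)
  finally show ?thesis .
qed

definition abs_vec :: "real^'n \<Rightarrow> real^'n" where
  "abs_vec x = (\<chi> i. \<bar>x $ i\<bar>)"

lemma inner_abs_vec_self [simp]: "abs_vec x \<bullet> abs_vec x = x \<bullet> x"
  by (simp add: abs_vec_def inner_vec_def)

lemma abs_inner_adj_map_le: "\<bar>x \<bullet> adj_map E x\<bar> \<le> abs_vec x \<bullet> adj_map E (abs_vec x)"
proof -
  have "\<bar>x \<bullet> adj_map E x\<bar> \<le> (\<Sum>v\<in>UNIV. \<bar>x $ v\<bar> * \<bar>\<Sum>w | E v w. x $ w\<bar>)"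
    unfolding inner_vec_def by (rule order_trans[OF sum_abs]) (simp add: abs_mult)
  also have "\<dots> \<le> (\<Sum>v\<in>UNIV. \<bar>x $ v\<bar> * (\<Sum>w | E v w. \<bar>x $ w\<bar>))"
    by (intro sum_mono mult_left_mono sum_abs) simp
  also have "\<dots> = abs_vec x \<bullet> adj_map E (abs_vec x)"
    by (simp add: inner_vec_def abs_vec_def)
  finally show ?thesis .
qed

definition proj_off :: "'v set \<Rightarrow> real^'v \<Rightarrow> real^'v" where
  "proj_off C x = (\<chi> v. if v \<in> C then 0 else x $ v)"

lemma proj_off_nth [simp]: "proj_off C x $ v = (if v \<in> C then 0 else x $ v)"
  by (simp add: proj_off_def)

lemma linear_proj_off: "linear (proj_off C)"
  by (rule linearI) (simp_all add: vec_eq_iff)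

lemma proj_off_selfadjoint: "proj_off C x \<bullet> y = x \<bullet> proj_off C y"
  unfolding inner_vec_def by (intro sum.cong) auto

lemma inner_proj_off_self_le: "proj_off C x \<bullet> proj_off C x \<le> x \<bullet> x"
  unfolding inner_vec_def by (intro sum_mono) auto

lemma inner_proj_off_one: "proj_off C 1 \<bullet> proj_off C (1 :: real^'v) = real (CARD('v) - card C)"
proof -
  have "proj_off C 1 \<bullet> proj_off C (1 :: real^'v) = (\<Sum>v\<in>UNIV. if v \<in> C then 0 else 1)"
    unfolding inner_vec_def by (intro sum.cong) auto
  also have "\<dots> = real (card (UNIV - C))"
    by (simp add: sum.If_cases Diff_eq)
  also have "\<dots> = real (CARD('v) - card C)"
    by (simp add: card_Diff_subset)
  finally show ?thesis .
qed

definition avoiding_adj :: "('v::finite \<Rightarrow> 'v \<Rightarrow> bool) \<Rightarrow> 'v set \<Rightarrow> real^'v \<Rightarrow> real^'v" where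
  "avoiding_adj E C = proj_off C \<circ> adj_map E \<circ> proj_off C"

lemma avoiding_adj_apply: "avoiding_adj E C x = proj_off C (adj_map E (proj_off C x))"
  by (simp add: avoiding_adj_def)

lemma linear_avoiding_adj: "linear (avoiding_adj E C)"
  unfolding avoiding_adj_def by (intro linear_compose linear_proj_off linear_adj_map)

lemma avoiding_adj_selfadjoint:
  assumes "symp E"
  shows "avoiding_adj E C x \<bullet> y = x \<bullet> avoiding_adj E C y"
  by (simp add: avoiding_adj_apply proj_off_selfadjoint adj_map_selfadjoint[OF assms])

definition walks_from :: "('v \<Rightarrow> 'v \<Rightarrow> bool) \<Rightarrow> 'v set \<Rightarrow> nat \<Rightarrow> 'v \<Rightarrow> 'v list set" where
  "walks_from E C l v = {xs \<in> avoiding_walks E C l. hd xs = v}"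

lemma finite_avoiding_walks: "finite (avoiding_walks E C l :: 'v::finite list set)"
  by (rule finite_subset[OF _ finite_lists_length_eq[of UNIV "Suc l"]])
    (auto simp: avoiding_walks_def)

lemma hd_avoiding_walk_notin: "xs \<in> avoiding_walks E C l \<Longrightarrow> hd xs \<notin> C"
  by (cases xs) (auto simp: avoiding_walks_def)

lemma walks_from_in: "v \<in> C \<Longrightarrow> walks_from E C l v = {}"
  by (auto simp: walks_from_def dest: hd_avoiding_walk_notin)

lemma finite_walks_from: "finite (walks_from E C l (v::'v::finite))"
  unfolding walks_from_def using finite_avoiding_walks by (rule finite_subset[rotated]) auto

lemma walks_from_0: "v \<notin> C \<Longrightarrow> walks_from E C 0 v = {[v]}"
  by (auto simp: walks_from_def avoiding_walks_def length_Suc_conv)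

lemma walks_from_Suc:
  assumes "v \<notin> C"
  shows "walks_from E C (Suc l) v = (\<Union>w\<in>{w. E v w}. (#) v ` walks_from E C l w)"
proof (intro set_eqI iffI)
  fix xs
  assume "xs \<in> walks_from E C (Suc l) v"
  then obtain w ys where "xs = v # w # ys" and "E v w" and "w # ys \<in> walks_from E C l w"
    by (auto simp: walks_from_def avoiding_walks_def length_Suc_conv)
  then show "xs \<in> (\<Union>w\<in>{w. E v w}. (#) v ` walks_from E C l w)"
    by blast
next
  fix xs
  assume "xs \<in> (\<Union>w\<in>{w. E v w}. (#) v ` walks_from E C l w)"
  then obtain w ys where "xs = v # ys" and "E v w" and "ys \<in> walks_from E C l w"
    by blast
  then show "xs \<in> walks_from E C (Suc l) v"
    using assms by (auto simp: walks_from_def avoiding_walks_def successively_Cons neq_Nil_conv)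
qed

lemma card_walks_from:
  "real (card (walks_from E C l v)) = ((avoiding_adj E C ^^ l) (proj_off C 1)) $ (v::'v::finite)"
proof (induction l arbitrary: v)
  case 0
  then show ?case
    by (cases "v \<in> C") (simp_all add: walks_from_in walks_from_0)
next
  case (Suc l)
  show ?case
  proof (cases "v \<in> C")
    case True
    then show ?thesis
      by (simp add: walks_from_in avoiding_adj_apply)
  next
    case False
    define y where "y = (avoiding_adj E C ^^ l) (proj_off C 1)"
    have IH: "proj_off C y $ w = real (card (walks_from E C l w))" for w
      using Suc.IH[of w] by (cases "w \<in> C") (simp_all add: walks_from_in y_def)
    have "card (walks_from E C (Suc l) v) = (\<Sum>w | E v w. card ((#) v ` walks_from E C l w))"
      unfolding walks_from_Suc[OF False]
      by (intro card_UN_disjoint ballI impI finite_imageI finite_walks_from) (auto simp: walks_from_def)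
    also have "\<dots> = (\<Sum>w | E v w. card (walks_from E C l w))"
      by (simp add: card_image)
    also have "real \<dots> = (\<Sum>w | E v w. proj_off C y $ w)"
      by (simp only: IH of_nat_sum)
    also have "\<dots> = avoiding_adj E C y $ v"
      using False by (simp add: avoiding_adj_apply)
    finally show ?thesis
      by (simp add: y_def)
  qed
qed

lemma card_avoiding_walks_eq_inner:
  "real (card (avoiding_walks E C l))
     = proj_off C 1 \<bullet> (avoiding_adj E C ^^ l) (proj_off C (1 :: real^'v::finite))"
proof -
  have "avoiding_walks E C l = (\<Union>v\<in>UNIV. walks_from E C l v)"
    by (auto simp: walks_from_def)
  moreover have "card (\<Union>v\<in>UNIV. walks_from E C l v) = (\<Sum>v\<in>UNIV. card (walks_from E C l v))"
    by (intro card_UN_disjoint ballI impI finite_walks_from finite_UNIV) (auto simp: walks_from_def)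
  ultimately have "real (card (avoiding_walks E C l)) = (\<Sum>v\<in>UNIV. real (card (walks_from E C l v)))"
    by simp
  also have "\<dots> = (\<Sum>v\<in>UNIV. proj_off C 1 $ v * real (card (walks_from E C l v)))"
    by (intro sum.cong) (auto simp: walks_from_in)
  finally show ?thesis
    by (simp add: inner_vec_def card_walks_from)
qed

definition cellwise_const :: "('v \<Rightarrow> nat) \<Rightarrow> real^'v \<Rightarrow> bool" where
  "cellwise_const p x \<longleftrightarrow> (\<forall>u v. p u = p v \<longrightarrow> x $ u = x $ v)"

text \<open>The orthogonal projection onto \<open>W\<close>, the span of the cell indicators.\<close>
definition cell_mean :: "('v::finite \<Rightarrow> nat) \<Rightarrow> real^'v \<Rightarrow> real^'v" where
  "cell_mean p x = (\<chi> v. (\<Sum>u\<in>cell p (p v). x $ u) / card (cell p (p v)))"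

lemma cell_mean_nth: "cell_mean p x $ v = (\<Sum>u\<in>cell p (p v). x $ u) / card (cell p (p v))"
  by (simp add: cell_mean_def)

lemma linear_cell_mean: "linear (cell_mean p)"
  by (rule linearI) (simp_all add: vec_eq_iff cell_mean_nth sum.distrib sum_distrib_left add_divide_distrib)

lemma cellwise_const_cell_mean: "cellwise_const p (cell_mean p x)"
  by (simp add: cellwise_const_def cell_mean_nth)

lemma cell_mean_cellwise_const:
  assumes "cellwise_const p w"
  shows "cell_mean p w = w"
proof -
  have "cell_mean p w $ v = w $ v" for v
  proof -
    have "(\<Sum>u\<in>cell p (p v). w $ u) = (\<Sum>u\<in>cell p (p v). w $ v)"
      using assms unfolding cellwise_const_def cell_def by (intro sum.cong refl) blast
    moreover have "cell p (p v) \<noteq> {}"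
      by (auto simp: cell_def)
    ultimately show ?thesis
      by (simp add: cell_mean_nth)
  qed
  then show ?thesis
    by (simp add: vec_eq_iff)
qed

lemma cell_mean_nonneg_nonzero:
  assumes "\<And>v. 0 \<le> z $ v" and "z \<noteq> 0"
  shows "cell_mean p z \<noteq> 0"
proof -
  obtain v where "z $ v \<noteq> 0"
    using assms(2) by (auto simp: vec_eq_iff)
  then have "0 < z $ v"
    using assms(1)[of v] by simp
  moreover have "z $ v \<le> (\<Sum>u\<in>cell p (p v). z $ u)"
    by (rule member_le_sum) (auto simp: assms(1) cell_def)
  moreover have "0 < card (cell p (p v))"
    by (auto simp: card_gt_0_iff cell_def)
  ultimately have "0 < cell_mean p z $ v"
    by (simp add: cell_mean_nth)
  then show ?thesis
    by auto
qed

lemma sum_cell_mean: "(\<Sum>v\<in>cell p i. cell_mean p x $ v) = (\<Sum>v\<in>cell p i. x $ v)"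
proof (cases "cell p i = {}")
  case False
  have "(\<Sum>v\<in>cell p i. cell_mean p x $ v) = (\<Sum>v\<in>cell p i. (\<Sum>u\<in>cell p i. x $ u) / card (cell p i))"
    by (intro sum.cong) (auto simp: cell_mean_nth cell_def)
  then show ?thesis
    using False by simp
qed simp

lemma perp_cells_diff_cell_mean: "perp_cells k p (vec_nth (x - cell_mean p x))"
  by (simp add: perp_cells_def sum_subtractf sum_cell_mean)

lemma sum_cell_eq_inner: "(\<Sum>v\<in>cell p i. x $ v) = (\<chi> v. if p v = i then 1 else 0) \<bullet> x"
proof -
  have "(\<chi> v. if p v = i then 1 else 0) \<bullet> x = (\<Sum>v\<in>UNIV. if p v = i then x $ v else 0)"
    unfolding inner_vec_def by (intro sum.cong) auto
  then show ?thesis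
    by (simp add: cell_def sum.inter_filter[symmetric])
qed

definition min_cell_fraction :: "nat \<Rightarrow> ('v \<Rightarrow> nat) \<Rightarrow> 'v set \<Rightarrow> real" where
  "min_cell_fraction k p C = (MIN i\<in>{..<k}. real (card (C \<inter> cell p i)) / real (card (cell p i)))"

lemma sum_cell_mean_square_le:
  fixes x :: "real^'v"
  assumes "\<And>v. v \<in> C \<Longrightarrow> x $ v = 0"
  shows "(\<Sum>v\<in>cell p i. (cell_mean p x $ v)\<^sup>2)
    \<le> (1 - card (C \<inter> cell p i) / card (cell p i)) * (\<Sum>v\<in>cell p i. (x $ v)\<^sup>2)"
proof (cases "cell p i = {}")
  case False
  define n s Q where "n = real (card (cell p i))" and "s = (\<Sum>v\<in>cell p i. x $ v)"
    and "Q = (\<Sum>v\<in>cell p i. (x $ v)\<^sup>2)"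
  define D where "D = cell p i - C"
  have "n > 0"
    using False by (simp add: n_def card_gt_0_iff)
  have "(\<Sum>v\<in>cell p i. (cell_mean p x $ v)\<^sup>2) = (\<Sum>v\<in>cell p i. (s / n)\<^sup>2)"
    by (intro sum.cong refl) (simp add: cell_mean_nth s_def n_def cell_def)
  also have "\<dots> = s\<^sup>2 / n"
    using \<open>n > 0\<close> by (simp add: n_def[symmetric] power2_eq_square)
  finally have lhs: "(\<Sum>v\<in>cell p i. (cell_mean p x $ v)\<^sup>2) = s\<^sup>2 / n" .
  have "s = (\<Sum>v\<in>D. 1 * x $ v)" and "Q = (\<Sum>v\<in>D. (x $ v)\<^sup>2)"
    unfolding s_def Q_def D_def using assms by (auto intro: sum.mono_neutral_right)
  then have "s\<^sup>2 \<le> real (card D) * Q"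
    using Cauchy_Schwarz_ineq_sum[of "\<lambda>_. 1" "vec_nth x" D] by simp
  moreover have "real (card D) = n - card (C \<inter> cell p i)"
    unfolding D_def n_def by (simp add: card_Diff_subset_Int Int_commute of_nat_diff card_mono)
  ultimately have "s\<^sup>2 / n \<le> (n - card (C \<inter> cell p i)) * Q / n"
    using \<open>n > 0\<close> by (simp add: divide_right_mono)
  also have "\<dots> = (1 - card (C \<inter> cell p i) / n) * Q"
    using \<open>n > 0\<close> by (simp add: field_simps)
  finally show ?thesis
    unfolding lhs Q_def n_def .
qed simp

locale S_regular_graph =
  fixes E :: "'v::finite \<Rightarrow> 'v \<Rightarrow> bool" and k :: nat
    and p :: "'v \<Rightarrow> nat" and S :: "nat \<Rightarrow> nat \<Rightarrow> nat"
  assumes symp: "symp E" and S_regular: "S_regular E k p S"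
begin

abbreviation A :: "real^'v \<Rightarrow> real^'v" where
  "A \<equiv> adj_map E"

abbreviation bulk :: "real^'v \<Rightarrow> bool" where
  "bulk x \<equiv> perp_cells k p (vec_nth x)"

abbreviation avoidance_rate :: "'v set \<Rightarrow> real" where
  "avoidance_rate C \<equiv>
     lambda_S k S * (1 - min_cell_fraction k p C) + lambda_B E k p * min_cell_fraction k p C"

lemma cell_index_less: "p v < k"
  using S_regular by (simp add: S_regular_def)

lemma cell_nonempty: "i < k \<Longrightarrow> cell p i \<noteq> {}"
  using S_regular by (simp add: S_regular_def)

lemma card_neighbours_in_cell: "j < k \<Longrightarrow> card {w. E v w \<and> p w = j} = S (p v) j"
  using S_regular by (simp add: S_regular_def)

lemma sum_UNIV_by_cells: "(\<Sum>v\<in>UNIV. f v) = (\<Sum>i<k. \<Sum>v\<in>cell p i. f v)"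
  using sum.group[of UNIV "{..<k}" p f] cell_index_less by (simp add: cell_def image_subset_iff)

definition rep :: "nat \<Rightarrow> 'v" where
  "rep i = (SOME v. p v = i)"

lemma p_rep:
  assumes "i < k"
  shows "p (rep i) = i"
proof -
  have "\<exists>v. p v = i"
    using cell_nonempty[OF assms] by (auto simp: cell_def)
  then show ?thesis
    unfolding rep_def by (rule someI_ex)
qed

lemma cellwise_const_nth:
  assumes "cellwise_const p w"
  shows "w $ v = w $ rep (p v)"
  using assms p_rep[OF cell_index_less, of v] unfolding cellwise_const_def by metis

lemma adj_map_cellwise_const_nth:
  assumes "cellwise_const p w"
  shows "A w $ v = (\<Sum>j<k. real (S (p v) j) * w $ rep j)"
proof -
  have "A w $ v = (\<Sum>j<k. \<Sum>u | E v u \<and> p u = j. w $ u)"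
    using sum.group[of "{u. E v u}" "{..<k}" p "vec_nth w"] cell_index_less
    by (simp add: image_subset_iff)
  also have "\<dots> = (\<Sum>j<k. \<Sum>u | E v u \<and> p u = j. w $ rep j)"
  proof (intro sum.cong refl)
    fix j u
    assume "u \<in> {u. E v u \<and> p u = j}"
    then show "w $ u = w $ rep j"
      using cellwise_const_nth[OF assms, of u] by simp
  qed
  also have "\<dots> = (\<Sum>j<k. real (S (p v) j) * w $ rep j)"
    by (intro sum.cong refl) (simp add: card_neighbours_in_cell)
  finally show ?thesis .
qed

lemma cellwise_const_adj_map:
  assumes "cellwise_const p w"
  shows "cellwise_const p (A w)"
  unfolding cellwise_const_def adj_map_cellwise_const_nth[OF assms] by simp

lemma inner_cellwise_const_bulk:
  assumes "cellwise_const p w" and "bulk b"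
  shows "w \<bullet> b = 0"
proof -
  have "w \<bullet> b = (\<Sum>i<k. \<Sum>v\<in>cell p i. w $ v * b $ v)"
    unfolding inner_vec_def inner_real_def by (rule sum_UNIV_by_cells)
  also have "\<dots> = (\<Sum>i<k. \<Sum>v\<in>cell p i. w $ rep i * b $ v)"
  proof (intro sum.cong refl)
    fix i v
    assume "v \<in> cell p i"
    then show "w $ v * b $ v = w $ rep i * b $ v"
      using cellwise_const_nth[OF assms(1), of v] by (simp add: cell_def)
  qed
  also have "\<dots> = (\<Sum>i<k. w $ rep i * (\<Sum>v\<in>cell p i. b $ v))"
    by (simp add: sum_distrib_left)
  also have "\<dots> = 0"
    using assms(2) by (simp add: perp_cells_def)
  finally show ?thesis .
qed

lemma bulk_adj_map:
  assumes "bulk b"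
  shows "bulk (A b)"
  unfolding perp_cells_def
proof (intro allI impI)
  fix i
  assume "i < k"
  define ind :: "real^'v" where "ind = (\<chi> v. if p v = i then 1 else 0)"
  have "cellwise_const p ind"
    by (simp add: cellwise_const_def ind_def)
  have "(\<Sum>v\<in>cell p i. A b $ v) = ind \<bullet> A b"
    unfolding ind_def by (rule sum_cell_eq_inner)
  also have "\<dots> = A ind \<bullet> b"
    by (simp add: adj_map_selfadjoint[OF symp])
  also have "\<dots> = 0"
    by (intro inner_cellwise_const_bulk cellwise_const_adj_map \<open>cellwise_const p ind\<close> assms)
  finally show "(\<Sum>v\<in>cell p i. A b $ v) = 0" .
qed

lemma subspace_bulk: "subspace {b. bulk b}"
  by (simp add: subspace_def perp_cells_def sum.distrib sum_distrib_left[symmetric])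

lemma cell_mean_bulk: "bulk b \<Longrightarrow> cell_mean p b = 0"
  using cell_index_less by (simp add: vec_eq_iff cell_mean_nth perp_cells_def)

lemma cell_mean_adj_map: "cell_mean p (A x) = A (cell_mean p x)"
proof -
  have "A x = A (cell_mean p x) + A (x - cell_mean p x)"
    by (simp add: linear_add[OF linear_adj_map, symmetric])
  then show ?thesis
    by (simp add: linear_add[OF linear_cell_mean] cell_mean_cellwise_const cellwise_const_adj_map
        cellwise_const_cell_mean cell_mean_bulk bulk_adj_map perp_cells_diff_cell_mean)
qed

lemma rayleigh_cell_decomposition:
  "x \<bullet> A x = cell_mean p x \<bullet> A (cell_mean p x) + (x - cell_mean p x) \<bullet> A (x - cell_mean p x)"
  "x \<bullet> x = cell_mean p x \<bullet> cell_mean p x + (x - cell_mean p x) \<bullet> (x - cell_mean p x)"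
proof -
  define w b where "w = cell_mean p x" and "b = x - cell_mean p x"
  have "x = w + b"
    by (simp add: w_def b_def)
  have "cellwise_const p w" "cellwise_const p (A w)" "bulk b" "bulk (A b)"
    by (simp_all add: w_def b_def cellwise_const_cell_mean cellwise_const_adj_map
        perp_cells_diff_cell_mean bulk_adj_map)
  then have "w \<bullet> A b = 0" "A w \<bullet> b = 0" "w \<bullet> b = 0"
    by (simp_all add: inner_cellwise_const_bulk)
  then show "x \<bullet> A x = w \<bullet> A w + b \<bullet> A b" "x \<bullet> x = w \<bullet> w + b \<bullet> b"
    unfolding \<open>x = w + b\<close>
    by (simp_all add: linear_add[OF linear_adj_map] inner_add_left inner_add_right inner_commute)
qed

lemma matrix_eigenvalues_iff:
  "\<mu> \<in> matrix_eigenvalues k S \<longleftrightarrow> (\<exists>w. cellwise_const p w \<and> w \<noteq> 0 \<and> A w = \<mu> *\<^sub>R w)"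
proof
  assume "\<mu> \<in> matrix_eigenvalues k S"
  then obtain y i where "i < k" "y i \<noteq> 0"
    and eig: "\<And>i. i < k \<Longrightarrow> (\<Sum>j<k. real (S i j) * y j) = \<mu> * y i"
    unfolding matrix_eigenvalues_def by blast
  define w :: "real^'v" where "w = (\<chi> v. y (p v))"
  have "cellwise_const p w"
    by (simp add: cellwise_const_def w_def)
  have "A w $ v = \<mu> * w $ v" for v
  proof -
    have "A w $ v = (\<Sum>j<k. real (S (p v) j) * y j)"
      unfolding adj_map_cellwise_const_nth[OF \<open>cellwise_const p w\<close>]
      by (intro sum.cong refl) (simp add: w_def p_rep)
    also have "\<dots> = \<mu> * w $ v"
      using eig[OF cell_index_less] by (simp add: w_def)
    finally show ?thesis .
  qed
  moreover have "w $ rep i \<noteq> 0"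
    using \<open>y i \<noteq> 0\<close> p_rep[OF \<open>i < k\<close>] by (simp add: w_def)
  ultimately show "\<exists>w. cellwise_const p w \<and> w \<noteq> 0 \<and> A w = \<mu> *\<^sub>R w"
    using \<open>cellwise_const p w\<close> by (intro exI[of _ w]) (auto simp: vec_eq_iff)
next
  assume "\<exists>w. cellwise_const p w \<and> w \<noteq> 0 \<and> A w = \<mu> *\<^sub>R w"
  then obtain w where w: "cellwise_const p w" "w \<noteq> 0" "A w = \<mu> *\<^sub>R w"
    by blast
  obtain v where "w $ v \<noteq> 0"
    using w(2) by (auto simp: vec_eq_iff)
  then have "w $ rep (p v) \<noteq> 0"
    using cellwise_const_nth[OF w(1), of v] by simp
  moreover have "(\<Sum>j<k. real (S i j) * w $ rep j) = \<mu> * w $ rep i" if "i < k" for i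
    using adj_map_cellwise_const_nth[OF w(1), of "rep i"] w(3) p_rep[OF that] by simp
  ultimately show "\<mu> \<in> matrix_eigenvalues k S"
    unfolding matrix_eigenvalues_def using cell_index_less
    by (intro CollectI exI[of _ "\<lambda>j. w $ rep j"] conjI) blast+
qed

lemma bulk_eigenvalues_iff:
  "\<mu> \<in> bulk_eigenvalues E k p \<longleftrightarrow> (\<exists>b. bulk b \<and> b \<noteq> 0 \<and> A b = \<mu> *\<^sub>R b)"
proof
  assume "\<mu> \<in> bulk_eigenvalues E k p"
  then obtain x where "x \<noteq> (\<lambda>_. 0)" "perp_cells k p x" "adj_op E x = (\<lambda>v. \<mu> * x v)"
    unfolding bulk_eigenvalues_def by blast
  then show "\<exists>b. bulk b \<and> b \<noteq> 0 \<and> A b = \<mu> *\<^sub>R b"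
    by (intro exI[of _ "vec_lambda x"]) (auto simp: vec_eq_iff adj_map_def fun_eq_iff vec_lambda_inverse)
next
  assume "\<exists>b. bulk b \<and> b \<noteq> 0 \<and> A b = \<mu> *\<^sub>R b"
  then obtain b where "bulk b" "b \<noteq> 0" "A b = \<mu> *\<^sub>R b"
    by blast
  then show "\<mu> \<in> bulk_eigenvalues E k p"
    unfolding bulk_eigenvalues_def
    by (intro CollectI exI[of _ "vec_nth b"]) (auto simp: vec_eq_iff adj_map_def fun_eq_iff vec_lambda_inverse)
qed

lemma finite_adj_map_eigenvalues: "finite {\<mu>. \<exists>x. x \<noteq> 0 \<and> A x = \<mu> *\<^sub>R x}"
  using adj_map_selfadjoint[OF symp] by (rule finite_eigenvalues_selfadjoint)

lemma finite_matrix_eigenvalues: "finite (matrix_eigenvalues k S)"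
  by (rule finite_subset[OF _ finite_adj_map_eigenvalues]) (auto simp: matrix_eigenvalues_iff)

lemma finite_bulk_eigenvalues: "finite (bulk_eigenvalues E k p)"
  by (rule finite_subset[OF _ finite_adj_map_eigenvalues]) (auto simp: bulk_eigenvalues_iff)

lemma inner_adj_map_le_lambda_S: "x \<bullet> A x \<le> lambda_S k S * (x \<bullet> x)"
proof -
  have "(1 :: real^'v) \<noteq> 0"
    by (simp add: vec_eq_iff)
  then obtain z0 where "norm z0 = 1" and max0: "\<And>x. x \<bullet> A x \<le> (z0 \<bullet> A z0) * (x \<bullet> x)"
    using rayleigh_max_exists[OF linear_adj_map subspace_UNIV] by blast
  define q where "q = z0 \<bullet> A z0"
  txt \<open>Perron-type step: \<open>\<bar>z0\<bar>\<close> is again a maximiser, hence an eigenvector, and being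
    nonnegative it has nonzero cell means, which form an eigenvector in \<open>W\<close>.\<close>
  define z where "z = abs_vec z0"
  have "z \<bullet> z = z0 \<bullet> z0"
    by (simp add: z_def)
  also have "\<dots> = 1"
    using \<open>norm z0 = 1\<close> by (simp add: dot_square_norm)
  finally have "z \<bullet> z = 1" .
  have "q \<le> z \<bullet> A z"
    unfolding q_def z_def by (rule order_trans[OF abs_ge_self abs_inner_adj_map_le])
  moreover have "z \<bullet> A z \<le> q * (z \<bullet> z)"
    using max0 by (simp add: q_def)
  ultimately have "z \<bullet> A z = q * (z \<bullet> z)"
    using \<open>z \<bullet> z = 1\<close> by simp
  with max0 have "A z = q *\<^sub>R z"
    by (intro rayleigh_max_imp_eigenvector[OF linear_adj_map adj_map_selfadjoint[OF symp] subspace_UNIV])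
      (simp_all add: q_def)
  then have "A (cell_mean p z) = q *\<^sub>R cell_mean p z"
    by (simp add: cell_mean_adj_map[symmetric] linear_scale[OF linear_cell_mean])
  moreover have "cell_mean p z \<noteq> 0"
    using \<open>z \<bullet> z = 1\<close> by (intro cell_mean_nonneg_nonzero) (auto simp: z_def abs_vec_def)
  ultimately have "q \<in> matrix_eigenvalues k S"
    using cellwise_const_cell_mean by (auto simp: matrix_eigenvalues_iff)
  then have "q \<le> lambda_S k S"
    unfolding lambda_S_def using finite_matrix_eigenvalues by simp
  then show ?thesis
    using max0[of x] mult_right_mono[of q "lambda_S k S" "x \<bullet> x"] by (simp add: q_def)
qed

lemma bulk_rayleigh_max:
  assumes "k < CARD('v)"
  shows "\<exists>\<mu>\<in>bulk_eigenvalues E k p. \<forall>b. bulk b \<longrightarrow> b \<bullet> A b \<le> \<mu> * (b \<bullet> b)"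
proof -
  have "\<not> inj p"
  proof
    assume "inj p"
    then have "CARD('v) = card (range p)"
      by (simp add: card_image)
    also have "\<dots> \<le> card {..<k}"
      using cell_index_less by (intro card_mono) auto
    finally show False
      using assms by simp
  qed
  then obtain u v where "u \<noteq> v" "p u = p v"
    unfolding inj_def by blast
  define b0 :: "real^'v" where "b0 = (\<chi> w. (if w = u then 1 else 0) - (if w = v then 1 else 0))"
  have "bulk b0"
    using \<open>p u = p v\<close> by (simp add: perp_cells_def b0_def sum_subtractf cell_def)
  moreover have "b0 \<noteq> 0"
    using \<open>u \<noteq> v\<close> by (auto simp: b0_def vec_eq_iff)
  ultimately obtain z where "bulk z" "norm z = 1" and max: "\<And>b. bulk b \<Longrightarrow> b \<bullet> A b \<le> (z \<bullet> A z) * (b \<bullet> b)"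
    using rayleigh_max_exists[OF linear_adj_map subspace_bulk, of b0] by auto
  have "A z = (z \<bullet> A z) *\<^sub>R z"
    using \<open>norm z = 1\<close> max \<open>bulk z\<close>
    by (intro rayleigh_max_imp_eigenvector[OF linear_adj_map adj_map_selfadjoint[OF symp] subspace_bulk])
      (simp_all add: bulk_adj_map dot_square_norm)
  then have "z \<bullet> A z \<in> bulk_eigenvalues E k p"
    using \<open>bulk z\<close> \<open>norm z = 1\<close> by (auto simp: bulk_eigenvalues_iff)
  with max show ?thesis
    by blast
qed

lemma inner_adj_map_le_lambda_B:
  assumes "k < CARD('v)" and "bulk b"
  shows "b \<bullet> A b \<le> lambda_B E k p * (b \<bullet> b)"
proof -
  obtain \<mu> where "\<mu> \<in> bulk_eigenvalues E k p" and max: "\<And>b. bulk b \<Longrightarrow> b \<bullet> A b \<le> \<mu> * (b \<bullet> b)"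
    using bulk_rayleigh_max[OF assms(1)] by blast
  then have "\<mu> \<le> lambda_B E k p"
    unfolding lambda_B_def using finite_bulk_eigenvalues
    by (intro order_trans[OF abs_ge_self Max_ge]) auto
  then show ?thesis
    using max[OF assms(2)] mult_right_mono[of \<mu> "lambda_B E k p" "b \<bullet> b"] by simp
qed

lemma lambda_B_le_lambda_S:
  assumes "k < CARD('v)"
  shows "lambda_B E k p \<le> lambda_S k S"
  unfolding lambda_B_def
proof (rule Max.boundedI)
  show "finite (abs ` bulk_eigenvalues E k p)"
    using finite_bulk_eigenvalues by simp
  show "abs ` bulk_eigenvalues E k p \<noteq> {}"
    using bulk_rayleigh_max[OF assms] by blast
next
  fix a
  assume "a \<in> abs ` bulk_eigenvalues E k p"
  then obtain \<mu> b where "a = \<bar>\<mu>\<bar>" "b \<noteq> 0" "A b = \<mu> *\<^sub>R b"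
    by (auto simp: bulk_eigenvalues_iff)
  then have "\<bar>\<mu>\<bar> * (b \<bullet> b) = \<bar>b \<bullet> A b\<bar>"
    by (simp add: abs_mult)
  also have "\<dots> \<le> abs_vec b \<bullet> A (abs_vec b)"
    by (rule abs_inner_adj_map_le)
  also have "\<dots> \<le> lambda_S k S * (b \<bullet> b)"
    using inner_adj_map_le_lambda_S[of "abs_vec b"] by simp
  finally show "a \<le> lambda_S k S"
    using \<open>a = \<bar>\<mu>\<bar>\<close> \<open>b \<noteq> 0\<close> by simp
qed

lemma cell_mean_inner_le:
  assumes "\<And>v. v \<in> C \<Longrightarrow> x $ v = 0"
  shows "cell_mean p x \<bullet> cell_mean p x \<le> (1 - min_cell_fraction k p C) * (x \<bullet> x)"
proof -
  have "cell_mean p x \<bullet> cell_mean p x = (\<Sum>i<k. \<Sum>v\<in>cell p i. (cell_mean p x $ v)\<^sup>2)"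
    unfolding inner_vec_def inner_real_def power2_eq_square by (rule sum_UNIV_by_cells)
  also have "\<dots> \<le> (\<Sum>i<k. (1 - min_cell_fraction k p C) * (\<Sum>v\<in>cell p i. (x $ v)\<^sup>2))"
  proof (rule sum_mono)
    fix i
    assume "i \<in> {..<k}"
    then have "min_cell_fraction k p C \<le> card (C \<inter> cell p i) / card (cell p i)"
      unfolding min_cell_fraction_def by (intro Min_le) auto
    then have "(1 - card (C \<inter> cell p i) / card (cell p i)) * (\<Sum>v\<in>cell p i. (x $ v)\<^sup>2)
        \<le> (1 - min_cell_fraction k p C) * (\<Sum>v\<in>cell p i. (x $ v)\<^sup>2)"
      by (intro mult_right_mono sum_nonneg) auto
    with sum_cell_mean_square_le[OF assms]
    show "(\<Sum>v\<in>cell p i. (cell_mean p x $ v)\<^sup>2) \<le> (1 - min_cell_fraction k p C) * (\<Sum>v\<in>cell p i. (x $ v)\<^sup>2)"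
      by (rule order_trans)
  qed
  also have "\<dots> = (1 - min_cell_fraction k p C) * (x \<bullet> x)"
    unfolding inner_vec_def inner_real_def sum_UNIV_by_cells[of "\<lambda>v. x $ v * x $ v"]
    by (simp add: sum_distrib_left power2_eq_square)
  finally show ?thesis .
qed

lemma inner_adj_map_le_avoidance_rate:
  assumes "k < CARD('v)" and "\<And>v. v \<in> C \<Longrightarrow> x $ v = 0"
  shows "x \<bullet> A x \<le> avoidance_rate C * (x \<bullet> x)"
proof -
  define w b where "w = cell_mean p x" and "b = x - cell_mean p x"
  have "x \<bullet> A x \<le> lambda_S k S * (w \<bullet> w) + lambda_B E k p * (b \<bullet> b)"
    using rayleigh_cell_decomposition(1)[of x] inner_adj_map_le_lambda_S[of w]
      inner_adj_map_le_lambda_B[OF assms(1) perp_cells_diff_cell_mean[of k p x]]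
    unfolding w_def b_def by linarith
  also have "\<dots> = lambda_B E k p * (x \<bullet> x) + (lambda_S k S - lambda_B E k p) * (w \<bullet> w)"
    using rayleigh_cell_decomposition(2)[of x] by (simp add: w_def b_def algebra_simps)
  also have "\<dots> \<le> lambda_B E k p * (x \<bullet> x)
      + (lambda_S k S - lambda_B E k p) * ((1 - min_cell_fraction k p C) * (x \<bullet> x))"
    using lambda_B_le_lambda_S[OF assms(1)] cell_mean_inner_le[OF assms(2)]
    by (intro add_left_mono mult_left_mono) (simp_all add: w_def)
  also have "\<dots> = avoidance_rate C * (x \<bullet> x)"
    by (simp add: algebra_simps)
  finally show ?thesis .
qed

lemma abs_inner_adj_map_le_avoidance_rate:
  assumes "k < CARD('v)" and "\<And>v. v \<in> C \<Longrightarrow> x $ v = 0"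
  shows "\<bar>x \<bullet> A x\<bar> \<le> avoidance_rate C * (x \<bullet> x)"
proof -
  have "\<bar>x \<bullet> A x\<bar> \<le> abs_vec x \<bullet> A (abs_vec x)"
    by (rule abs_inner_adj_map_le)
  also have "\<dots> \<le> avoidance_rate C * (abs_vec x \<bullet> abs_vec x)"
    using assms by (intro inner_adj_map_le_avoidance_rate) (simp_all add: abs_vec_def)
  finally show ?thesis
    by simp
qed

lemma abs_inner_avoiding_adj_le_avoidance_rate:
  assumes "k < CARD('v)" and "C \<noteq> UNIV"
  shows "\<bar>x \<bullet> avoiding_adj E C x\<bar> \<le> avoidance_rate C * (x \<bullet> x)"
proof -
  obtain u where "u \<notin> C"
    using assms(2) by blast
  then have "\<bar>axis u 1 \<bullet> A (axis u 1)\<bar> \<le> avoidance_rate C * (axis u 1 \<bullet> axis u (1::real))"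
    by (intro abs_inner_adj_map_le_avoidance_rate[OF assms(1)]) (auto simp: axis_def)
  then have "0 \<le> avoidance_rate C"
    by (simp add: inner_axis_axis)
  have "\<bar>x \<bullet> avoiding_adj E C x\<bar> = \<bar>proj_off C x \<bullet> A (proj_off C x)\<bar>"
    by (simp add: avoiding_adj_apply proj_off_selfadjoint[symmetric])
  also have "\<dots> \<le> avoidance_rate C * (proj_off C x \<bullet> proj_off C x)"
    by (intro abs_inner_adj_map_le_avoidance_rate[OF assms(1)]) simp
  also have "\<dots> \<le> avoidance_rate C * (x \<bullet> x)"
    using \<open>0 \<le> avoidance_rate C\<close> by (intro mult_left_mono inner_proj_off_self_le)
  finally show ?thesis .
qed

end

theorem mainTheorem7:
  fixes E :: "'v::finite \<Rightarrow> 'v \<Rightarrow> bool"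
    and k :: nat and p :: "'v \<Rightarrow> nat" and S :: "nat \<Rightarrow> nat \<Rightarrow> nat"
    and C :: "'v set" and l :: nat
  assumes "simple_connected_graph E"
    and "S_regular E k p S"
    and "card (UNIV :: 'v set) > k"
    and "C \<subset> UNIV"
  shows "real (card (avoiding_walks E C l))
     \<le> real (card (UNIV :: 'v set) - card C) *
        (lambda_S k S * (1 - (MIN i\<in>{..<k}. real (card (C \<inter> cell p i)) / real (card (cell p i))))
         + lambda_B E k p * (MIN i\<in>{..<k}. real (card (C \<inter> cell p i)) / real (card (cell p i)))) ^ l"
proof -
  interpret S_regular_graph E k p S
    using assms(1,2) by unfold_locales (auto simp: simple_connected_graph_def symp_def)
  have "real (card (avoiding_walks E C l)) = proj_off C 1 \<bullet> (avoiding_adj E C ^^ l) (proj_off C 1)"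
    by (rule card_avoiding_walks_eq_inner)
  also have "\<dots> \<le> avoidance_rate C ^ l * (proj_off C 1 \<bullet> proj_off C 1)"
    using assms(3,4)
    by (intro inner_funpow_le_of_abs_rayleigh_le linear_avoiding_adj avoiding_adj_selfadjoint symp
        abs_inner_avoiding_adj_le_avoidance_rate) auto
  also have "\<dots> = real (card (UNIV :: 'v set) - card C) * avoidance_rate C ^ l"
    by (simp add: inner_proj_off_one)
  finally show ?thesis
    unfolding min_cell_fraction_def .
qed

end
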